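(* Let $T$ be a locally compact Hausdorff space, $\tau : T\to T$ a proper local homeomorphism, and $(C_0(T),\alpha,L)$ the associated Exel system. For every ideal $I$ of $C_0(T)\rtimes_{\alpha,L}\mathbb{N}$, the set $$Y_I := \{t\in T : f(t) = 0 \text{ for all } f\in C_0(T) \text{ such that } k_A(f)\in I\}$$ is a closed invariant subset of $T$.
   Context: A subset $Y\subset T$ is invariant if $\tau(Y)\subset Y$ and $\tau^{-1}(Y)\subset Y$. The associated Exel system is $(C_0(T),\alpha,L)$ with $\alpha(f) = f\circ\tau$ and $L(f)(t) = |\tau^{-1}(t)|^{-1}\sum_{\tau(s)=t} f(s)$. $M_L$ is the Hilbert $C_0(T)$-module completion of $C_0(T)$ with right action $g\cdot f = g\alpha(f)$, inner product $\langle g,h\rangle_L = L(\bar gh)$, left action $\phi$ by multiplication. The crossed product $C_0(T)\rtimes_{\alpha,L}\mathbb{N}$ is (identified with) the Cuntz–Pimsner algebra $\mathcal{O}(M_L)$: the C*-algebra generated by a universal pair $(k_{M_L},k_A)$, with $k_{M_L} : M_L\to\mathcal{O}(M_L)$ linear and $k_A : C_0(T)\to\mathcal{O}(M_L)$ a homomorphism, satisfying $k_{M_L}(x\cdot a) = k_{M_L}(x)k_A(a)$, $k_{M_L}(x)^*k_{M_L}(y) = k_A(\langle x,y\rangle_L)$, $k_{M_L}(a\cdot x) = k_A(a)k_{M_L}(x)$, and $(k_{M_L},k_A)^{(1)}(\phi(f)) = k_A(f)$ for all $f\in C_0(T)$, where $(k_{M_L},k_A)^{(1)}$ is the homomorphism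 on compact operators with $\Theta_{x,y}\mapsto k_{M_L}(x)k_{M_L}(y)^*$, $\Theta_{x,y}(z) = x\cdot\langle y,z\rangle_L$. *)

theory Defs
  imports "HOL-Analysis.Analysis"
begin

class cstar_algebra = real_normed_algebra + banach +
  fixes scaleC :: "complex \<Rightarrow> 'a \<Rightarrow> 'a"
    and cstar :: "'a \<Rightarrow> 'a"
  assumes scaleC_add_right: "scaleC c (a + b) = scaleC c a + scaleC c b"
    and scaleC_add_left: "scaleC (c + d) a = scaleC c a + scaleC d a"
    and scaleC_scaleC: "scaleC c (scaleC d a) = scaleC (c * d) a"
    and scaleC_one: "scaleC 1 a = a"
    and scaleR_scaleC: "scaleR r a = scaleC (of_real r) a"
    and scaleC_mult_left: "scaleC c a * b = scaleC c (a * b)"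
    and scaleC_mult_right: "a * scaleC c b = scaleC c (a * b)"
    and norm_scaleC: "norm (scaleC c a) = cmod c * norm a"
    and cstar_add: "cstar (a + b) = cstar a + cstar b"
    and cstar_scaleC: "cstar (scaleC c a) = scaleC (cnj c) (cstar a)"
    and cstar_cstar: "cstar (cstar a) = a"
    and cstar_mult: "cstar (a * b) = cstar b * cstar a"
    and cstar_identity: "norm (cstar a * a) = (norm a)\<^sup>2"

definition cstar_ideal :: "'b::cstar_algebra set \<Rightarrow> bool" where
  "cstar_ideal I \<longleftrightarrow> closed I \<and> 0 \<in> I \<and>
     (\<forall>a\<in>I. \<forall>b\<in>I. a + b \<in> I) \<and> (\<forall>c. \<forall>a\<in>I. scaleC c a \<in> I) \<and>
     (\<forall>a\<in>I. \<forall>b. b * a \<in> I \<and> a * b \<in> I)"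

definition cstar_subalgebra :: "'b::cstar_algebra set \<Rightarrow> bool" where
  "cstar_subalgebra S \<longleftrightarrow> closed S \<and> 0 \<in> S \<and>
     (\<forall>a\<in>S. \<forall>b\<in>S. a + b \<in> S \<and> a * b \<in> S) \<and> (\<forall>c. \<forall>a\<in>S. scaleC c a \<in> S) \<and>
     (\<forall>a\<in>S. cstar a \<in> S)"

definition star_hom :: "('b::cstar_algebra \<Rightarrow> 'c::cstar_algebra) \<Rightarrow> bool" where
  "star_hom h \<longleftrightarrow> (\<forall>a b c. h (a + b) = h a + h b \<and> h (scaleC c a) = scaleC c (h a) \<and>
      h (a * b) = h a * h b \<and> h (cstar a) = cstar (h a))"

definition C0 :: "('a::topological_space \<Rightarrow> complex) set" where
  "C0 = {f. continuous_on UNIV f \<and> (\<forall>e>0. compact {t. e \<le> cmod (f t)})}"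

definition proper_local_homeo :: "('a::topological_space \<Rightarrow> 'a) \<Rightarrow> bool" where
  "proper_local_homeo \<tau> \<longleftrightarrow> continuous_on UNIV \<tau> \<and>
     (\<forall>K. compact K \<longrightarrow> compact (\<tau> -` K)) \<and>
     (\<forall>t. \<exists>U. open U \<and> t \<in> U \<and> open (\<tau> ` U) \<and> (\<exists>g. homeomorphism U (\<tau> ` U) \<tau> g))"

definition exel_alpha :: "('a \<Rightarrow> 'a) \<Rightarrow> ('a \<Rightarrow> complex) \<Rightarrow> ('a \<Rightarrow> complex)" where
  "exel_alpha \<tau> f = f \<circ> \<tau>"

definition exel_L :: "('a \<Rightarrow> 'a) \<Rightarrow> ('a \<Rightarrow> complex) \<Rightarrow> ('a \<Rightarrow> complex)" where
  "exel_L \<tau> f = (\<lambda>t. (\<Sum>s\<in>\<tau> -` {t}. f s) / of_nat (card (\<tau> -` {t})))"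

text \<open>The pre-Hilbert module structure on C0(T) whose completion is M_L.\<close>
definition ModL_rmul :: "('a \<Rightarrow> 'a) \<Rightarrow> ('a \<Rightarrow> complex) \<Rightarrow> ('a \<Rightarrow> complex) \<Rightarrow> ('a \<Rightarrow> complex)" where
  "ModL_rmul \<tau> g f = (\<lambda>s. g s * exel_alpha \<tau> f s)"

definition ModL_lmul :: "('a \<Rightarrow> complex) \<Rightarrow> ('a \<Rightarrow> complex) \<Rightarrow> ('a \<Rightarrow> complex)" where
  "ModL_lmul f g = (\<lambda>s. f s * g s)"

definition ModL_ip :: "('a \<Rightarrow> 'a) \<Rightarrow> ('a \<Rightarrow> complex) \<Rightarrow> ('a \<Rightarrow> complex) \<Rightarrow> ('a \<Rightarrow> complex)" where
  "ModL_ip \<tau> g h = exel_L \<tau> (\<lambda>s. cnj (g s) * h s)"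

definition sup_norm :: "('a \<Rightarrow> complex) \<Rightarrow> real" where
  "sup_norm f = Sup (insert 0 (range (\<lambda>t. cmod (f t))))"

definition ModL_norm :: "('a \<Rightarrow> 'a) \<Rightarrow> ('a \<Rightarrow> complex) \<Rightarrow> real" where
  "ModL_norm \<tau> g = sqrt (sup_norm (ModL_ip \<tau> g g))"

definition Theta :: "('a \<Rightarrow> 'a) \<Rightarrow> ('a \<Rightarrow> complex) \<Rightarrow> ('a \<Rightarrow> complex) \<Rightarrow> ('a \<Rightarrow> complex) \<Rightarrow> ('a \<Rightarrow> complex)" where
  "Theta \<tau> x y z = ModL_rmul \<tau> x (ModL_ip \<tau> y z)"

definition Theta_sum :: "('a \<Rightarrow> 'a) \<Rightarrow> (('a \<Rightarrow> complex) \<times> ('a \<Rightarrow> complex)) list \<Rightarrow> ('a \<Rightarrow> complex) \<Rightarrow> ('a \<Rightarrow> complex)" where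
  "Theta_sum \<tau> F z = (\<lambda>s. sum_list (map (\<lambda>(x, y). Theta \<tau> x y z s) F))"

text \<open>Operator norm on M_L of phi(f) - sum Theta_{x_i,y_i}, computed on the dense subspace C0(T).\<close>
definition op_dist :: "('a::topological_space \<Rightarrow> 'a) \<Rightarrow> ('a \<Rightarrow> complex) \<Rightarrow> (('a \<Rightarrow> complex) \<times> ('a \<Rightarrow> complex)) list \<Rightarrow> real" where
  "op_dist \<tau> f F = Sup {ModL_norm \<tau> (\<lambda>s. ModL_lmul f z s - Theta_sum \<tau> F z s) | z. z \<in> C0 \<and> ModL_norm \<tau> z \<le> 1}"

text \<open>Image of sum Theta_{x_i,y_i} under (k_M,k_A)^(1).\<close>
definition theta_image :: "(('a \<Rightarrow> complex) \<Rightarrow> 'b::cstar_algebra) \<Rightarrow> (('a \<Rightarrow> complex) \<times> ('a \<Rightarrow> complex)) list \<Rightarrow> 'b" where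
  "theta_image kM F = sum_list (map (\<lambda>(x, y). kM x * cstar (kM y)) F)"

text \<open>Covariant (Cuntz--Pimsner) pair for M_L, with k_M given on the dense subspace C0(T) of M_L.\<close>
definition CP_covariant ::
  "('a::topological_space \<Rightarrow> 'a) \<Rightarrow> (('a \<Rightarrow> complex) \<Rightarrow> 'b::cstar_algebra) \<Rightarrow> (('a \<Rightarrow> complex) \<Rightarrow> 'b) \<Rightarrow> bool" where
  "CP_covariant \<tau> kM kA \<longleftrightarrow>
     (\<forall>f\<in>C0. \<forall>g\<in>C0. \<forall>c.
        kA (\<lambda>t. f t + g t) = kA f + kA g \<and> kA (\<lambda>t. c * f t) = scaleC c (kA f) \<and>
        kA (\<lambda>t. f t * g t) = kA f * kA g \<and> kA (\<lambda>t. cnj (f t)) = cstar (kA f) \<and>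
        kM (\<lambda>t. f t + g t) = kM f + kM g \<and> kM (\<lambda>t. c * f t) = scaleC c (kM f)) \<and>
     (\<forall>x\<in>C0. \<forall>a\<in>C0. kM (ModL_rmul \<tau> x a) = kM x * kA a) \<and>
     (\<forall>x\<in>C0. \<forall>y\<in>C0. cstar (kM x) * kM y = kA (ModL_ip \<tau> x y)) \<and>
     (\<forall>a\<in>C0. \<forall>x\<in>C0. kM (ModL_lmul a x) = kA a * kM x) \<and>
     (\<forall>f\<in>C0. \<forall>F :: nat \<Rightarrow> (('a \<Rightarrow> complex) \<times> ('a \<Rightarrow> complex)) list.
        (\<forall>n. set (F n) \<subseteq> C0 \<times> C0) \<longrightarrow> (\<lambda>n. op_dist \<tau> f (F n)) \<longlonglongrightarrow> 0 \<longrightarrow>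
        (\<lambda>n. theta_image kM (F n)) \<longlonglongrightarrow> kA f)"

text \<open>(B, k_M, k_A) is the Cuntz--Pimsner algebra O(M_L) = C0(T) x_{alpha,L} N:
  generated by a covariant pair, universal among covariant pairs (into C*-algebras of type 'c).\<close>
definition is_exel_crossed_product ::
  "'c::cstar_algebra itself \<Rightarrow> ('a::topological_space \<Rightarrow> 'a) \<Rightarrow> (('a \<Rightarrow> complex) \<Rightarrow> 'b::cstar_algebra) \<Rightarrow> (('a \<Rightarrow> complex) \<Rightarrow> 'b) \<Rightarrow> bool" where
  "is_exel_crossed_product _ \<tau> kM kA \<longleftrightarrow>
     CP_covariant \<tau> kM kA \<and>
     (\<forall>S. cstar_subalgebra S \<and> kM ` C0 \<subseteq> S \<and> kA ` C0 \<subseteq> S \<longrightarrow> S = UNIV) \<and>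
     (\<forall>(\<psi> :: ('a \<Rightarrow> complex) \<Rightarrow> 'c) \<pi>. CP_covariant \<tau> \<psi> \<pi> \<longrightarrow>
        (\<exists>h. star_hom h \<and> (\<forall>x\<in>C0. h (kM x) = \<psi> x) \<and> (\<forall>a\<in>C0. h (kA a) = \<pi> a)))"

definition tau_invariant :: "('a \<Rightarrow> 'a) \<Rightarrow> 'a set \<Rightarrow> bool" where
  "tau_invariant \<tau> Y \<longleftrightarrow> \<tau> ` Y \<subseteq> Y \<and> \<tau> -` Y \<subseteq> Y"

end

theory Submission
  imports Defs
begin

text \<open>Y_I is an intersection of zero sets of continuous functions, hence closed. Invariance is
  tested on a sheet W around t: an open set on which tau is injective and all fibres
  tau^-1(tau s) have the same cardinality N (disjoint sheets over the fibre of tau t give the lower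
  bound, properness of tau the upper one). Take a bump e supported in W with e t = 1. Left
  multiplication by e^2 (f o tau) on M_L is the rank-one operator Theta_{e (f o tau), N e}, so
  covariance gives k_A(e^2 (f o tau)) = k_M(e (f o tau)) k_M(N e)^* in I whenever k_A f is in I;
  evaluating at t shows tau(Y_I) \<subseteq> Y_I. Conversely k_A <e, f e>_L = k_M(e)^* k_M(f e) is in I,
  and <e, f e>_L = L(e^2 f) takes the value f t / N at tau t, so tau^-1(Y_I) \<subseteq> Y_I.\<close>

lemma C0_imp_continuous: "f \<in> C0 \<Longrightarrow> continuous_on UNIV f"
  by (simp add: C0_def)

lemma C0_zero: "(\<lambda>t. 0) \<in> C0"
  by (simp add: C0_def)

lemma C0_if_compact_support:
  fixes f :: "'a::t2_space \<Rightarrow> complex"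
  assumes cont: "continuous_on UNIV f" and "compact K" and vanish: "\<And>t. t \<notin> K \<Longrightarrow> f t = 0"
  shows "f \<in> C0"
proof -
  have "compact {t. e \<le> cmod (f t)}" if "e > 0" for e
  proof -
    have "closed {t. e \<le> cmod (f t)}"
      using cont by (intro closed_Collect_le continuous_intros) auto
    moreover have "{t. e \<le> cmod (f t)} \<subseteq> K"
      using vanish that by force
    ultimately show ?thesis
      using \<open>compact K\<close> compact_Int_closed by (metis inf.absorb_iff2)
  qed
  then show ?thesis
    using cont by (simp add: C0_def)
qed

lemma Hausdorff_space_euclidean_t2: "Hausdorff_space (euclidean :: 'a::t2_space topology)"
  unfolding Hausdorff_space_def disjnt_def by (metis separation_t2 open_openin)

lemma locally_compact_bump:
  fixes W :: "'a::t2_space set"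
  assumes lc: "locally_compact_space (euclidean :: 'a topology)" and "open W" "t \<in> W"
  obtains w :: "'a \<Rightarrow> real" and K where "continuous_on UNIV w" "w t = 1"
    "compact K" "K \<subseteq> W" "\<And>s. s \<notin> K \<Longrightarrow> w s = 0"
proof -
  have "neighbourhood_base_of (compactin euclidean) (euclidean :: 'a topology)"
    using lc locally_compact_space_neighbourhood_base Hausdorff_space_euclidean_t2 by blast
  then obtain U K where U: "open U" "compact K" "t \<in> U" "U \<subseteq> K" "K \<subseteq> W"
    using assms unfolding neighbourhood_base_of by (metis compactin_euclidean_iff open_openin)
  have "completely_regular_space (euclidean :: 'a topology)"
    using lc Hausdorff_space_euclidean_t2 locally_compact_regular_imp_completely_regular_space by blast
  then obtain f :: "'a \<Rightarrow> real"
    where f: "continuous_map euclidean (top_of_set {0..1}) f" "f t = 0" "f ` (- U) \<subseteq> {1}"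
  proof -
    have "closedin euclidean (- U) \<and> t \<in> topspace euclidean - (- U)"
      using U by auto
    with that show ?thesis
      using \<open>completely_regular_space euclidean\<close> unfolding completely_regular_space_def by blast
  qed
  have "continuous_on UNIV f"
    using f(1) by (simp add: continuous_map_in_subtopology)
  then show ?thesis
    using f U by (intro that[of "\<lambda>s. 1 - f s" K] continuous_intros) auto
qed

lemma proper_local_homeo_continuous: "proper_local_homeo \<tau> \<Longrightarrow> continuous_on UNIV \<tau>"
  by (simp add: proper_local_homeo_def)

lemma proper_local_homeo_locally_injective:
  assumes "proper_local_homeo \<tau>"
  obtains U where "open U" "t \<in> U" "inj_on \<tau> U"
  using assms unfolding proper_local_homeo_def by (metis homeomorphism_def inj_on_inverseI)

lemma proper_local_homeo_open_image:
  assumes plh: "proper_local_homeo \<tau>" and "open S"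
  shows "open (\<tau> ` S)"
proof -
  have "\<exists>U. t \<in> U \<and> open (\<tau> ` (S \<inter> U))" for t
  proof -
    obtain U g where "t \<in> U" "open U" "open (\<tau> ` U)" and hom: "homeomorphism U (\<tau> ` U) \<tau> g"
      using plh unfolding proper_local_homeo_def by blast
    moreover have "openin (top_of_set (\<tau> ` U)) (\<tau> ` (S \<inter> U))"
      using \<open>open S\<close> by (metis homeomorphism_imp_open_map[OF hom] inf_commute openin_open_Int)
    ultimately have "open (\<tau> ` (S \<inter> U))"
      using openin_open_trans by blast
    with \<open>t \<in> U\<close> show ?thesis by blast
  qed
  then obtain U where "\<And>t. t \<in> U t" "\<And>t. open (\<tau> ` (S \<inter> U t))"
    by metis
  then have "\<tau> ` S = (\<Union>t\<in>S. \<tau> ` (S \<inter> U t))"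
    by blast
  then show ?thesis
    using \<open>\<And>t. open (\<tau> ` (S \<inter> U t))\<close> by auto
qed

lemma proper_local_homeo_closed_image:
  fixes \<tau> :: "'a::t2_space \<Rightarrow> 'a"
  assumes lc: "locally_compact_space (euclidean :: 'a topology)"
    and plh: "proper_local_homeo \<tau>" and "closed S"
  shows "closed (\<tau> ` S)"
proof -
  have "proper_map euclidean euclidean \<tau>"
    using plh by (intro compact_imp_proper_map locally_compact_imp_k_space[OF lc]
        Hausdorff_imp_kc_space Hausdorff_space_euclidean_t2)
      (auto simp: proper_local_homeo_def vimage_def)
  then show ?thesis
    using \<open>closed S\<close> by (simp add: proper_map_def closed_map_def)
qed

lemma proper_local_homeo_finite_fibre:
  fixes \<tau> :: "'a::topological_space \<Rightarrow> 'a"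
  assumes plh: "proper_local_homeo \<tau>"
  shows "finite (\<tau> -` {v})"
proof -
  have "\<forall>t. \<exists>U. open U \<and> t \<in> U \<and> inj_on \<tau> U"
    by (meson proper_local_homeo_locally_injective[OF plh])
  then obtain U where U: "\<And>t. open (U t) \<and> t \<in> U t \<and> inj_on \<tau> (U t)"
    by metis
  have "compact (\<tau> -` {v})"
    using plh by (simp add: proper_local_homeo_def)
  then obtain K where K: "K \<subseteq> \<tau> -` {v}" "finite K" "\<tau> -` {v} \<subseteq> (\<Union>k\<in>K. U k)"
    by (rule compactE_image[of _ "\<tau> -` {v}" U]) (use U in auto)
  have "\<tau> -` {v} \<subseteq> K"
  proof
    fix x assume x: "x \<in> \<tau> -` {v}"
    then obtain k where "k \<in> K" "x \<in> U k"
      using K(3) by blast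
    moreover have "\<tau> x = \<tau> k"
      using x \<open>k \<in> K\<close> K(1) by auto
    ultimately show "x \<in> K"
      using U by (metis inj_onD)
  qed
  then show ?thesis
    using K(2) finite_subset by blast
qed

lemma t2_finite_disjoint_open_nbhds:
  fixes P :: "'a::t2_space set"
  assumes "finite P"
  obtains U where "\<And>u. open (U u)" "\<And>u. u \<in> U u"
    "\<And>u u'. u \<in> P \<Longrightarrow> u' \<in> P \<Longrightarrow> u \<noteq> u' \<Longrightarrow> U u \<inter> U u' = {}"
proof -
  obtain A B where AB: "\<And>x y :: 'a. x \<noteq> y \<Longrightarrow>
      open (A x y) \<and> open (B x y) \<and> x \<in> A x y \<and> y \<in> B x y \<and> A x y \<inter> B x y = {}"
    by (metis separation_t2)
  define U where "U u = (\<Inter>u'\<in>P - {u}. A u u' \<inter> B u' u)" for u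
  show ?thesis
  proof
    show "open (U u)" for u
      unfolding U_def using assms AB by (intro open_INT open_Int) auto
    show "u \<in> U u" for u
      unfolding U_def
    proof (rule INT_I)
      fix u' assume "u' \<in> P - {u}"
      then have "u \<noteq> u'" "u' \<noteq> u"
        by auto
      then show "u \<in> A u u' \<inter> B u' u"
        using AB by blast
    qed
    show "U u \<inter> U u' = {}" if "u \<in> P" "u' \<in> P" "u \<noteq> u'" for u u'
    proof -
      have "U u \<subseteq> A u u'" "U u' \<subseteq> B u u'"
        unfolding U_def using that by auto
      then show ?thesis
        using AB[OF \<open>u \<noteq> u'\<close>] by blast
    qed
  qed
qed

lemma card_fibre_eq_card_sheets:
  assumes inj: "\<And>u. u \<in> P \<Longrightarrow> inj_on \<tau> (U u)"
    and disj: "\<And>u u'. u \<in> P \<Longrightarrow> u' \<in> P \<Longrightarrow> u \<noteq> u' \<Longrightarrow> U u \<inter> U u' = {}"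
    and hit: "\<And>u. u \<in> P \<Longrightarrow> v \<in> \<tau> ` U u"
    and cover: "\<tau> -` {v} \<subseteq> (\<Union>u\<in>P. U u)"
  shows "card (\<tau> -` {v}) = card P"
proof -
  have "\<forall>u\<in>P. \<exists>y. y \<in> U u \<and> \<tau> y = v"
    using hit by blast
  then obtain x where x: "\<And>u. u \<in> P \<Longrightarrow> x u \<in> U u" "\<And>u. u \<in> P \<Longrightarrow> \<tau> (x u) = v"
    by metis
  have "\<tau> -` {v} = x ` P"
  proof
    show "\<tau> -` {v} \<subseteq> x ` P"
    proof
      fix y assume y: "y \<in> \<tau> -` {v}"
      then obtain u where "u \<in> P" "y \<in> U u"
        using cover by blast
      moreover have "\<tau> y = \<tau> (x u)"
        using y x(2)[OF \<open>u \<in> P\<close>] by simp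
      ultimately have "y = x u"
        using inj x(1) by (meson inj_onD)
      then show "y \<in> x ` P"
        using \<open>u \<in> P\<close> by blast
    qed
    show "x ` P \<subseteq> \<tau> -` {v}"
      using x(2) by blast
  qed
  moreover have "inj_on x P"
  proof (rule inj_onI)
    fix u u' assume "u \<in> P" "u' \<in> P" "x u = x u'"
    then have "x u \<in> U u \<inter> U u'"
      using x(1) by (metis IntI)
    then show "u = u'"
      using disj \<open>u \<in> P\<close> \<open>u' \<in> P\<close> by blast
  qed
  ultimately show ?thesis
    by (simp add: card_image)
qed

lemma proper_local_homeo_disjoint_sheets:
  fixes \<tau> :: "'a::t2_space \<Rightarrow> 'a"
  assumes plh: "proper_local_homeo \<tau>"
  obtains U where "\<And>u. open (U u)" "\<And>u. u \<in> U u" "\<And>u. inj_on \<tau> (U u)"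
    "\<And>u u'. \<tau> u = v \<Longrightarrow> \<tau> u' = v \<Longrightarrow> u \<noteq> u' \<Longrightarrow> U u \<inter> U u' = {}"
proof -
  have "\<forall>u. \<exists>U. open U \<and> u \<in> U \<and> inj_on \<tau> U"
    by (meson proper_local_homeo_locally_injective[OF plh])
  then obtain U0 where U0: "\<forall>u. open (U0 u) \<and> u \<in> U0 u \<and> inj_on \<tau> (U0 u)"
    by (rule choice[THEN exE])
  obtain D where D: "\<And>u. open (D u)" "\<And>u. u \<in> D u"
    "\<And>u u'. u \<in> \<tau> -` {v} \<Longrightarrow> u' \<in> \<tau> -` {v} \<Longrightarrow> u \<noteq> u' \<Longrightarrow> D u \<inter> D u' = {}"
    using t2_finite_disjoint_open_nbhds[OF proper_local_homeo_finite_fibre[OF plh]] by blast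
  show ?thesis
  proof
    show "open (U0 u \<inter> D u)" for u
      using U0 D(1) by (simp add: open_Int)
    show "u \<in> U0 u \<inter> D u" for u
      using U0 D(2) by blast
    show "inj_on \<tau> (U0 u \<inter> D u)" for u
      using U0 by (meson inf_le1 inj_on_subset)
    show "(U0 u \<inter> D u) \<inter> (U0 u' \<inter> D u') = {}" if "\<tau> u = v" "\<tau> u' = v" "u \<noteq> u'" for u u'
      using D(3)[of u u'] that by auto
  qed
qed

lemma proper_local_homeo_card_fibre_nbhd:
  fixes \<tau> :: "'a::t2_space \<Rightarrow> 'a"
  assumes lc: "locally_compact_space (euclidean :: 'a topology)" and plh: "proper_local_homeo \<tau>"
    and U: "\<And>u. open (U u)" "\<And>u. u \<in> U u" "\<And>u. inj_on \<tau> (U u)"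
    and disj: "\<And>u u'. \<tau> u = v \<Longrightarrow> \<tau> u' = v \<Longrightarrow> u \<noteq> u' \<Longrightarrow> U u \<inter> U u' = {}"
  obtains V where "open V" "v \<in> V" "\<And>v'. v' \<in> V \<Longrightarrow> card (\<tau> -` {v'}) = card (\<tau> -` {v})"
proof
  \<comment> \<open>Points whose fibre meets every sheet and lies in their union; open since tau is closed.\<close>
  define V where "V = (\<Inter>u\<in>\<tau> -` {v}. \<tau> ` U u) - \<tau> ` (- (\<Union>u\<in>\<tau> -` {v}. U u))"
  show "open V"
    unfolding V_def using proper_local_homeo_finite_fibre[OF plh] U(1)
    by (intro open_Diff open_INT proper_local_homeo_closed_image[OF lc plh] closed_Compl open_UN)
      (auto intro: proper_local_homeo_open_image[OF plh])
  have "v \<in> \<tau> ` U u" if "\<tau> u = v" for u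
    using U(2) that by (metis image_eqI)
  moreover have "v \<notin> \<tau> ` (- (\<Union>u\<in>\<tau> -` {v}. U u))"
  proof
    assume "v \<in> \<tau> ` (- (\<Union>u\<in>\<tau> -` {v}. U u))"
    then obtain y where "\<tau> y = v" "y \<notin> (\<Union>u\<in>\<tau> -` {v}. U u)"
      by (metis ComplD imageE)
    then show False
      using U(2) by blast
  qed
  ultimately show "v \<in> V"
    unfolding V_def by blast
  show "card (\<tau> -` {v'}) = card (\<tau> -` {v})" if "v' \<in> V" for v'
  proof (rule card_fibre_eq_card_sheets)
    show "v' \<in> \<tau> ` U u" if "u \<in> \<tau> -` {v}" for u
      using \<open>v' \<in> V\<close> that unfolding V_def by blast
    show "\<tau> -` {v'} \<subseteq> (\<Union>u\<in>\<tau> -` {v}. U u)"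
    proof
      fix y assume y: "y \<in> \<tau> -` {v'}"
      show "y \<in> (\<Union>u\<in>\<tau> -` {v}. U u)"
      proof (rule ccontr)
        assume "y \<notin> (\<Union>u\<in>\<tau> -` {v}. U u)"
        then have "v' \<in> \<tau> ` (- (\<Union>u\<in>\<tau> -` {v}. U u))"
          using y by (metis ComplI image_eqI vimage_singleton_eq)
        then show False
          using \<open>v' \<in> V\<close> by (simp add: V_def)
      qed
    qed
  qed (use U(3) disj in auto)
qed

lemma proper_local_homeo_card_fibre_locally_constant:
  fixes \<tau> :: "'a::t2_space \<Rightarrow> 'a"
  assumes lc: "locally_compact_space (euclidean :: 'a topology)" and plh: "proper_local_homeo \<tau>"
  obtains W where "open W" "t \<in> W" "inj_on \<tau> W"
    "\<And>s. s \<in> W \<Longrightarrow> card (\<tau> -` {\<tau> s}) = card (\<tau> -` {\<tau> t})"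
proof -
  obtain U where U: "\<And>u. open (U u)" "\<And>u. u \<in> U u" "\<And>u. inj_on \<tau> (U u)"
    "\<And>u u'. \<tau> u = \<tau> t \<Longrightarrow> \<tau> u' = \<tau> t \<Longrightarrow> u \<noteq> u' \<Longrightarrow> U u \<inter> U u' = {}"
    using proper_local_homeo_disjoint_sheets[OF plh] by blast
  obtain V where V: "open V" "\<tau> t \<in> V" "\<And>v'. v' \<in> V \<Longrightarrow> card (\<tau> -` {v'}) = card (\<tau> -` {\<tau> t})"
    using proper_local_homeo_card_fibre_nbhd[OF lc plh U] by blast
  show ?thesis
  proof
    show "open (U t \<inter> \<tau> -` V)"
      using U(1) V(1) proper_local_homeo_continuous[OF plh] by (intro open_Int open_vimage) auto
    show "t \<in> U t \<inter> \<tau> -` V"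
      using U(2) V(2) by simp
    show "inj_on \<tau> (U t \<inter> \<tau> -` V)"
      using U(3) by (meson inf_le1 inj_on_subset)
    show "card (\<tau> -` {\<tau> s}) = card (\<tau> -` {\<tau> t})" if "s \<in> U t \<inter> \<tau> -` V" for s
      using V(3) that by simp
  qed
qed

lemma proper_local_homeo_card_fibre_pos:
  assumes "proper_local_homeo \<tau>"
  shows "0 < card (\<tau> -` {\<tau> t})"
proof -
  have "t \<in> \<tau> -` {\<tau> t}"
    by simp
  then show ?thesis
    using proper_local_homeo_finite_fibre[OF assms] card_gt_0_iff by blast
qed

lemma proper_local_homeo_homeomorphism_onto_image:
  assumes plh: "proper_local_homeo \<tau>" and "open W" and "inj_on \<tau> W"
  obtains g where "homeomorphism W (\<tau> ` W) \<tau> g"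
proof (rule homeomorphism_injective_open_map[OF _ refl \<open>inj_on \<tau> W\<close>])
  show "continuous_on W \<tau>"
    using proper_local_homeo_continuous[OF plh] continuous_on_subset by blast
  show "openin (top_of_set (\<tau> ` W)) (\<tau> ` U)" if "openin (top_of_set W) U" for U
  proof -
    have "open U" "U \<subseteq> W"
      using that \<open>open W\<close> openin_open_trans openin_imp_subset by blast+
    then show ?thesis
      by (intro open_subset image_mono proper_local_homeo_open_image[OF plh])
  qed
qed

lemma proper_local_homeo_sheet_bump:
  fixes \<tau> :: "'a::t2_space \<Rightarrow> 'a"
  assumes lc: "locally_compact_space (euclidean :: 'a topology)" and plh: "proper_local_homeo \<tau>"
  obtains W and w :: "'a \<Rightarrow> real" and K where "open W" "inj_on \<tau> W"
    "\<And>s. s \<in> W \<Longrightarrow> card (\<tau> -` {\<tau> s}) = card (\<tau> -` {\<tau> t})"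
    "continuous_on UNIV w" "w t = 1" "compact K" "K \<subseteq> W" "\<And>s. s \<notin> K \<Longrightarrow> w s = 0"
proof -
  obtain W where W: "open W" "t \<in> W" "inj_on \<tau> W"
    "\<And>s. s \<in> W \<Longrightarrow> card (\<tau> -` {\<tau> s}) = card (\<tau> -` {\<tau> t})"
    using proper_local_homeo_card_fibre_locally_constant[OF lc plh] by blast
  obtain w :: "'a \<Rightarrow> real" and K where "continuous_on UNIV w" "w t = 1" "compact K" "K \<subseteq> W"
    "\<And>s. s \<notin> K \<Longrightarrow> w s = 0"
    using locally_compact_bump[OF lc W(1,2)] by blast
  with W show ?thesis
    using that by blast
qed

lemma exel_L_eq_0_off_image:
  assumes "\<And>u. u \<notin> K \<Longrightarrow> k u = 0" and "v \<notin> \<tau> ` K"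
  shows "exel_L \<tau> k v = 0"
  using assms by (auto simp: exel_L_def intro!: sum.neutral)

lemma exel_L_apply_injective:
  assumes "inj_on \<tau> W" "s \<in> W" "finite (\<tau> -` {\<tau> s})" and vanish: "\<And>u. u \<notin> W \<Longrightarrow> k u = 0"
  shows "exel_L \<tau> k (\<tau> s) = k s / of_nat (card (\<tau> -` {\<tau> s}))"
proof -
  have "k u = 0" if "u \<in> \<tau> -` {\<tau> s} - {s}" for u
    using that assms(1,2) vanish by (auto dest: inj_onD)
  then have "(\<Sum>u\<in>\<tau> -` {\<tau> s}. k u) = (\<Sum>u\<in>{s}. k u)"
    using assms(3) by (intro sum.mono_neutral_right) auto
  then show ?thesis
    by (simp add: exel_L_def)
qed

lemma exel_L_in_C0:
  fixes \<tau> :: "'a::t2_space \<Rightarrow> 'a"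
  assumes plh: "proper_local_homeo \<tau>" and "open W" "inj_on \<tau> W"
    and card: "\<And>s. s \<in> W \<Longrightarrow> card (\<tau> -` {\<tau> s}) = N"
    and k: "continuous_on UNIV k" "compact K" "K \<subseteq> W" "\<And>u. u \<notin> K \<Longrightarrow> k u = 0"
  shows "exel_L \<tau> k \<in> C0"
proof -
  obtain g where g: "homeomorphism W (\<tau> ` W) \<tau> g"
    using proper_local_homeo_homeomorphism_onto_image[OF plh \<open>open W\<close> \<open>inj_on \<tau> W\<close>] .
  have "exel_L \<tau> k v = k (g v) / of_nat N" if "v \<in> \<tau> ` W" for v
  proof -
    have "g v \<in> W" "\<tau> (g v) = v"
      using g that by (auto simp: homeomorphism_def)
    have "exel_L \<tau> k (\<tau> (g v)) = k (g v) / of_nat (card (\<tau> -` {\<tau> (g v)}))"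
      using \<open>inj_on \<tau> W\<close> \<open>g v \<in> W\<close> proper_local_homeo_finite_fibre[OF plh] k(3,4)
      by (intro exel_L_apply_injective) auto
    then show ?thesis
      using card[OF \<open>g v \<in> W\<close>] \<open>\<tau> (g v) = v\<close> by simp
  qed
  moreover have "continuous_on (\<tau> ` W) (\<lambda>v. k (g v) / of_nat N)"
    unfolding divide_inverse using g
    by (intro continuous_on_mult_right continuous_on_compose2[OF k(1)]) (auto simp: homeomorphism_def)
  ultimately have "continuous_on (\<tau> ` W) (exel_L \<tau> k)"
    by (metis (no_types, lifting) continuous_on_eq)
  moreover have "continuous_on (- (\<tau> ` K)) (exel_L \<tau> k)"
    using exel_L_eq_0_off_image[of K k] k(4) by (intro continuous_on_eq[OF continuous_on_const]) auto
  moreover have "compact (\<tau> ` K)"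
    using k(2) proper_local_homeo_continuous[OF plh]
    by (metis compact_continuous_image continuous_on_subset subset_UNIV)
  moreover have "open (\<tau> ` W)"
    using proper_local_homeo_open_image[OF plh \<open>open W\<close>] .
  ultimately have "continuous_on (\<tau> ` W \<union> - (\<tau> ` K)) (exel_L \<tau> k)"
    by (intro continuous_on_open_Un) (auto intro: compact_imp_closed)
  moreover have "\<tau> ` W \<union> - (\<tau> ` K) = UNIV"
    using k(3) by blast
  ultimately have "continuous_on UNIV (exel_L \<tau> k)"
    by simp
  then show ?thesis
    using \<open>compact (\<tau> ` K)\<close> exel_L_eq_0_off_image[of K k] k(4) C0_if_compact_support by blast
qed

lemma ModL_norm_zero: "ModL_norm \<tau> (\<lambda>s. 0) = 0"
  by (simp add: ModL_norm_def ModL_ip_def exel_L_def sup_norm_def)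

lemma op_dist_eq_0:
  assumes "\<And>z. z \<in> C0 \<Longrightarrow> ModL_lmul f z = Theta_sum \<tau> F z"
  shows "op_dist \<tau> f F = 0"
proof -
  have "{ModL_norm \<tau> (\<lambda>s. ModL_lmul f z s - Theta_sum \<tau> F z s) | z. z \<in> C0 \<and> ModL_norm \<tau> z \<le> 1} = {0}"
    using assms C0_zero ModL_norm_zero[of \<tau>] by force
  then show ?thesis
    by (simp add: op_dist_def)
qed

lemma CP_covariant_theta_image_eq:
  assumes "CP_covariant \<tau> kM kA" "f \<in> C0" "set F \<subseteq> C0 \<times> C0"
    and "\<And>z. z \<in> C0 \<Longrightarrow> ModL_lmul f z = Theta_sum \<tau> F z"
  shows "theta_image kM F = kA f"
proof -
  have "(\<lambda>n. theta_image kM F) \<longlonglongrightarrow> kA f"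
    using assms op_dist_eq_0[of f \<tau> F] unfolding CP_covariant_def by simp
  then show ?thesis
    by (simp add: LIMSEQ_const_iff)
qed

lemma CP_covariant_kM_rmul:
  "CP_covariant \<tau> kM kA \<Longrightarrow> x \<in> C0 \<Longrightarrow> a \<in> C0 \<Longrightarrow> kM (ModL_rmul \<tau> x a) = kM x * kA a"
  by (simp add: CP_covariant_def)

lemma CP_covariant_kM_lmul:
  "CP_covariant \<tau> kM kA \<Longrightarrow> a \<in> C0 \<Longrightarrow> x \<in> C0 \<Longrightarrow> kM (ModL_lmul a x) = kA a * kM x"
  by (simp add: CP_covariant_def)

lemma CP_covariant_inner:
  "CP_covariant \<tau> kM kA \<Longrightarrow> x \<in> C0 \<Longrightarrow> y \<in> C0 \<Longrightarrow> cstar (kM x) * kM y = kA (ModL_ip \<tau> x y)"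
  by (simp add: CP_covariant_def)

lemma cstar_ideal_mult_left: "cstar_ideal I \<Longrightarrow> a \<in> I \<Longrightarrow> b * a \<in> I"
  by (simp add: cstar_ideal_def)

lemma cstar_ideal_mult_right: "cstar_ideal I \<Longrightarrow> a \<in> I \<Longrightarrow> a * b \<in> I"
  by (simp add: cstar_ideal_def)

lemma ModL_lmul_eq_Theta_sum_on_sheet:
  fixes w :: "'a \<Rightarrow> real"
  assumes "inj_on \<tau> W" and card: "\<And>s. s \<in> W \<Longrightarrow> card (\<tau> -` {\<tau> s}) = N" and "N > 0"
    and vanish: "\<And>s. s \<notin> W \<Longrightarrow> w s = 0"
  defines "e \<equiv> \<lambda>s. complex_of_real (w s)"
  shows "ModL_lmul (\<lambda>s. e s * ModL_rmul \<tau> e f s) z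
    = Theta_sum \<tau> [(ModL_rmul \<tau> e f, \<lambda>s. of_nat N * e s)] z"
proof
  fix s
  have Theta: "Theta_sum \<tau> [(ModL_rmul \<tau> e f, \<lambda>s. of_nat N * e s)] z s
      = e s * f (\<tau> s) * exel_L \<tau> (\<lambda>u. cnj (of_nat N * e u) * z u) (\<tau> s)"
    by (simp add: Theta_sum_def Theta_def ModL_rmul_def ModL_ip_def exel_alpha_def)
  show "ModL_lmul (\<lambda>s. e s * ModL_rmul \<tau> e f s) z s
    = Theta_sum \<tau> [(ModL_rmul \<tau> e f, \<lambda>s. of_nat N * e s)] z s"
  proof (cases "s \<in> W")
    case True
    have "finite (\<tau> -` {\<tau> s})"
      using card[OF True] \<open>N > 0\<close> card_ge_0_finite by metis
    then have "exel_L \<tau> (\<lambda>u. cnj (of_nat N * e u) * z u) (\<tau> s) = cnj (of_nat N * e s) * z s / of_nat N"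
      using exel_L_apply_injective[OF \<open>inj_on \<tau> W\<close> True] card[OF True] vanish
      by (simp add: e_def)
    also have "\<dots> = e s * z s"
      using \<open>N > 0\<close> by (simp add: e_def)
    finally show ?thesis
      using Theta by (simp add: ModL_lmul_def ModL_rmul_def exel_alpha_def)
  next
    case False
    then show ?thesis
      using Theta vanish by (simp add: ModL_lmul_def ModL_rmul_def e_def)
  qed
qed

definition zero_set_of_ideal :: "(('a::topological_space \<Rightarrow> complex) \<Rightarrow> 'b) \<Rightarrow> 'b set \<Rightarrow> 'a set" where
  "zero_set_of_ideal kA I = {t. \<forall>f\<in>C0. kA f \<in> I \<longrightarrow> f t = 0}"

lemma closed_zero_set_of_ideal:
  "closed (zero_set_of_ideal kA I :: 'a::topological_space set)"
proof -
  have "zero_set_of_ideal kA I = (\<Inter>f\<in>{f\<in>C0. kA f \<in> I}. {t. f t = 0})"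
    by (auto simp: zero_set_of_ideal_def)
  moreover have "closed {t::'a. f t = 0}" if "f \<in> C0" for f
    using C0_imp_continuous[OF that] by (intro closed_Collect_eq continuous_on_const)
  ultimately show ?thesis
    by auto
qed

lemma zero_set_of_ideal_image:
  fixes \<tau> :: "'a::t2_space \<Rightarrow> 'a" and kM kA :: "('a \<Rightarrow> complex) \<Rightarrow> 'b::cstar_algebra"
  assumes lc: "locally_compact_space (euclidean :: 'a topology)" and plh: "proper_local_homeo \<tau>"
    and cov: "CP_covariant \<tau> kM kA" and I: "cstar_ideal I"
    and t: "t \<in> zero_set_of_ideal kA I"
  shows "\<tau> t \<in> zero_set_of_ideal kA I"
  unfolding zero_set_of_ideal_def
proof (intro CollectI ballI impI)
  fix f assume f: "f \<in> C0" "kA f \<in> I"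
  define N where "N = card (\<tau> -` {\<tau> t})"
  obtain W and w :: "'a \<Rightarrow> real" and K where "open W"
    and W: "inj_on \<tau> W" "\<And>s. s \<in> W \<Longrightarrow> card (\<tau> -` {\<tau> s}) = N"
    and w: "continuous_on UNIV w" "w t = 1" "compact K" "K \<subseteq> W" "\<And>s. s \<notin> K \<Longrightarrow> w s = 0"
    using proper_local_homeo_sheet_bump[OF lc plh, of t] unfolding N_def by blast
  define e where "e = (\<lambda>s. complex_of_real (w s))"
  define x where "x = ModL_rmul \<tau> e f"
  define y where "y = (\<lambda>s. of_nat N * e s)"
  define g where "g = (\<lambda>s. e s * x s)"
  have e: "continuous_on UNIV e" "\<And>s. s \<notin> K \<Longrightarrow> e s = 0"
    unfolding e_def using w by (auto intro: continuous_on_of_real)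
  have "continuous_on UNIV (\<lambda>s. f (\<tau> s))"
    using C0_imp_continuous[OF f(1)] proper_local_homeo_continuous[OF plh]
    by (auto intro: continuous_on_compose2)
  then have x: "continuous_on UNIV x" "\<And>s. s \<notin> K \<Longrightarrow> x s = 0"
    using e unfolding x_def ModL_rmul_def exel_alpha_def o_def by (auto intro: continuous_on_mult)
  have "continuous_on UNIV y" "continuous_on UNIV g"
    using e x unfolding y_def g_def by (auto intro: continuous_on_mult continuous_on_const)
  then have C0: "e \<in> C0" "x \<in> C0" "y \<in> C0" "g \<in> C0"
    using e x C0_if_compact_support[OF _ \<open>compact K\<close>] unfolding y_def g_def by auto
  have "0 < N"
    unfolding N_def by (rule proper_local_homeo_card_fibre_pos[OF plh])
  moreover have "\<And>s. s \<notin> W \<Longrightarrow> w s = 0"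
    using w(4,5) by blast
  ultimately have "ModL_lmul g z = Theta_sum \<tau> [(x, y)] z" for z
    using ModL_lmul_eq_Theta_sum_on_sheet[OF W] unfolding g_def x_def y_def e_def by blast
  then have "theta_image kM [(x, y)] = kA g"
    using C0 by (intro CP_covariant_theta_image_eq[OF cov]) auto
  moreover have "kM x \<in> I"
    using CP_covariant_kM_rmul[OF cov C0(1) f(1)] cstar_ideal_mult_left[OF I f(2)]
    by (simp add: x_def)
  ultimately have "kA g \<in> I"
    using cstar_ideal_mult_right[OF I, of "kM x" "cstar (kM y)"] by (simp add: theta_image_def)
  then have "g t = 0"
    using t C0(4) by (simp add: zero_set_of_ideal_def)
  then show "f (\<tau> t) = 0"
    using w(2) by (simp add: g_def x_def e_def ModL_rmul_def exel_alpha_def)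
qed

lemma zero_set_of_ideal_vimage:
  fixes \<tau> :: "'a::t2_space \<Rightarrow> 'a" and kM kA :: "('a \<Rightarrow> complex) \<Rightarrow> 'b::cstar_algebra"
  assumes lc: "locally_compact_space (euclidean :: 'a topology)" and plh: "proper_local_homeo \<tau>"
    and cov: "CP_covariant \<tau> kM kA" and I: "cstar_ideal I"
    and t: "\<tau> t \<in> zero_set_of_ideal kA I"
  shows "t \<in> zero_set_of_ideal kA I"
  unfolding zero_set_of_ideal_def
proof (intro CollectI ballI impI)
  fix f assume f: "f \<in> C0" "kA f \<in> I"
  define N where "N = card (\<tau> -` {\<tau> t})"
  obtain W and w :: "'a \<Rightarrow> real" and K where W: "open W" "inj_on \<tau> W" "\<And>s. s \<in> W \<Longrightarrow> card (\<tau> -` {\<tau> s}) = N"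
    and w: "continuous_on UNIV w" "w t = 1" "compact K" "K \<subseteq> W" "\<And>s. s \<notin> K \<Longrightarrow> w s = 0"
    using proper_local_homeo_sheet_bump[OF lc plh, of t] unfolding N_def by blast
  define e where "e = (\<lambda>s. complex_of_real (w s))"
  define m where "m = ModL_lmul f e"
  define k where "k = (\<lambda>s. cnj (e s) * m s)"
  have e: "continuous_on UNIV e" "\<And>s. s \<notin> K \<Longrightarrow> e s = 0"
    unfolding e_def using w by (auto intro: continuous_on_of_real)
  moreover have "continuous_on UNIV m" "\<And>s. s \<notin> K \<Longrightarrow> m s = 0"
    using e C0_imp_continuous[OF f(1)] unfolding m_def ModL_lmul_def by (auto intro: continuous_on_mult)
  ultimately have C0: "e \<in> C0" "m \<in> C0"
    using C0_if_compact_support[OF _ \<open>compact K\<close>] by blast+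
  have k: "continuous_on UNIV k" "\<And>s. s \<notin> K \<Longrightarrow> k s = 0"
    using e \<open>continuous_on UNIV m\<close> unfolding k_def by (auto intro: continuous_on_mult continuous_on_cnj)
  have "kM m \<in> I"
    using CP_covariant_kM_lmul[OF cov f(1) C0(1)] cstar_ideal_mult_right[OF I f(2)]
    by (simp add: m_def)
  then have "kA (exel_L \<tau> k) \<in> I"
    using CP_covariant_inner[OF cov C0] cstar_ideal_mult_left[OF I, of "kM m" "cstar (kM e)"]
    by (simp add: ModL_ip_def k_def)
  moreover have "exel_L \<tau> k \<in> C0"
    using W w(3,4) k by (intro exel_L_in_C0[OF plh]) auto
  ultimately have "exel_L \<tau> k (\<tau> t) = 0"
    using t by (simp add: zero_set_of_ideal_def)
  moreover have "exel_L \<tau> k (\<tau> t) = k t / of_nat N"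
  proof -
    have "t \<in> W"
      using w(2,4,5) by force
    moreover have "\<And>u. u \<notin> W \<Longrightarrow> k u = 0"
      using w(4) k(2) by blast
    ultimately show ?thesis
      using exel_L_apply_injective[OF W(2)] proper_local_homeo_finite_fibre[OF plh]
      by (simp add: N_def)
  qed
  moreover have "0 < N"
    unfolding N_def by (rule proper_local_homeo_card_fibre_pos[OF plh])
  ultimately show "f t = 0"
    using w(2) by (simp add: k_def m_def e_def ModL_lmul_def)
qed

theorem lemma7p1:
  fixes \<tau> :: "'a::t2_space \<Rightarrow> 'a"
    and kM kA :: "('a \<Rightarrow> complex) \<Rightarrow> 'b::cstar_algebra"
    and I :: "'b set"
  assumes "locally_compact_space (euclidean :: 'a topology)"
    and "proper_local_homeo \<tau>"
    and "is_exel_crossed_product TYPE('c::cstar_algebra) \<tau> kM kA"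
    and "cstar_ideal I"
  shows "closed {t. \<forall>f\<in>C0. kA f \<in> I \<longrightarrow> f t = 0} \<and>
         tau_invariant \<tau> {t. \<forall>f\<in>C0. kA f \<in> I \<longrightarrow> f t = 0}"
proof -
  have cov: "CP_covariant \<tau> kM kA"
    using assms(3) by (simp add: is_exel_crossed_product_def)
  have "\<tau> ` zero_set_of_ideal kA I \<subseteq> zero_set_of_ideal kA I"
    using zero_set_of_ideal_image[OF assms(1,2) cov assms(4)] by blast
  moreover have "\<tau> -` zero_set_of_ideal kA I \<subseteq> zero_set_of_ideal kA I"
    using zero_set_of_ideal_vimage[OF assms(1,2) cov assms(4)] by blast
  ultimately show ?thesis
    using closed_zero_set_of_ideal[of kA I]
    unfolding tau_invariant_def zero_set_of_ideal_def by blast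
qed

end
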